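(* Let $X\in\mathbb{R}^{d\times m}$ and $Y\in\mathbb{R}^{d\times n}$ satisfy $\mathrm{Span}(X)\cap\mathrm{Span}(Y)=\{0\}$. Then $$u^\intercal(XX^\intercal+YY^\intercal)^\dagger v=\begin{cases}u^\intercal(XX^\intercal)^\dagger v,& u,v\in\mathrm{Span}(X),\\ 0,& u\in\mathrm{Span}(X),\ v\in\mathrm{Span}(Y),\\ u^\intercal(YY^\intercal)^\dagger v,& u,v\in\mathrm{Span}(Y).\end{cases}$$
   Context: $\mathrm{Span}(X)$ is the column space of $X$; $A^\dagger$ is the Moore–Penrose pseudo-inverse. *)

theory Defs
  imports "HOL-Analysis.Analysis"
begin

definition pinv :: "real^'n^'m \<Rightarrow> real^'m^'n" where
  "pinv A = (THE B. A ** B ** A = A \<and> B ** A ** B = B \<and>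
                    transpose (A ** B) = A ** B \<and> transpose (B ** A) = B ** A)"

definition col_span :: "real^'n^'m \<Rightarrow> (real^'m) set" where
  "col_span A = range (\<lambda>x. A *v x)"

end

(*
  Write M = X X\<^sup>T + Y Y\<^sup>T. Since z\<^sup>T M z = |X\<^sup>T z|\<^sup>2 + |Y\<^sup>T z|\<^sup>2, the null space of M lies in
  those of X\<^sup>T and Y\<^sup>T, so Span(X) and Span(Y) lie in Span(M), and w = M\<^sup>+ v solves
  M w = v for every v = X a + Y b. Then X X\<^sup>T w - X a = Y b - Y Y\<^sup>T w lies in
  Span(X) \<inter> Span(Y) = {0}, i.e. X X\<^sup>T w = X a. For u in Span(X) = Span(X X\<^sup>T) this gives
  u\<^sup>T M\<^sup>+ v = u\<^sup>T w = u\<^sup>T (X X\<^sup>T)\<^sup>+ X X\<^sup>T w = u\<^sup>T (X X\<^sup>T)\<^sup>+ X a, which yields all three cases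
  (b = 0, a = 0, or X and Y exchanged).

  The Moore-Penrose inverse itself is obtained as G A K from a minimum-norm
  g-inverse G (A G A = A, G A symmetric) and a least-squares g-inverse K
  (A K A = A, A K symmetric); uniqueness is the usual Penrose argument.
*)

theory Submission
  imports Defs
begin

declare transpose_matrix_vector [simp del]

lemma inner_matrix_vector_transpose:
  "((A::real^'n^'m) *v x) \<bullet> y = x \<bullet> (transpose A *v y)"
  by (metis dot_lmul_matrix inner_commute transpose_matrix_vector)

lemma transpose_eq_self_if_self_adjoint:
  fixes P :: "real^'n^'n"
  assumes "\<And>x y. (P *v x) \<bullet> y = x \<bullet> (P *v y)"
  shows "transpose P = P"
proof -
  have "adjoint ((*v) P) = (*v) P"
    using assms by (intro adjoint_unique) blast
  then have "(*v) (transpose P) = (*v) P"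
    using adjoint_matrix[of P] by (simp add: fun_eq_iff)
  then show ?thesis
    by (simp add: matrix_eq fun_eq_iff)
qed

lemma col_span_mult [iff]: "A *v x \<in> col_span A"
  by (simp add: col_span_def)

lemma subspace_col_span: "subspace (col_span A)"
  unfolding col_span_def
  using linear_subspace_image[OF matrix_vector_mul_linear subspace_UNIV] by simp

lemma null_space_orthogonal_row_space:
  assumes "A *v n = 0" and "r \<in> col_span (transpose A)"
  shows "n \<bullet> r = 0"
proof -
  obtain e where "r = transpose A *v e"
    using assms(2) by (auto simp: col_span_def)
  then show ?thesis
    using assms(1) inner_matrix_vector_transpose[of A n e] by simp
qed

lemma row_space_null_space_decomp:
  fixes A :: "real^'n^'m"
  obtains r where "r \<in> col_span (transpose A)" and "A *v (x - r) = 0"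
proof -
  obtain r n where r: "r \<in> span (col_span (transpose A))"
    and n: "\<And>w. w \<in> span (col_span (transpose A)) \<Longrightarrow> orthogonal n w" and "x = r + n"
    by (rule orthogonal_subspace_decomp_exists[of "col_span (transpose A)" x]) blast
  have "(A *v n) \<bullet> (A *v n) = n \<bullet> (transpose A *v (A *v n))"
    by (rule inner_matrix_vector_transpose)
  also have "\<dots> = 0"
    using n[of "transpose A *v (A *v n)"] by (simp add: span_base orthogonal_def)
  finally have "A *v n = 0"
    by simp
  moreover have "r \<in> col_span (transpose A)"
    using r by (simp add: span_eq_iff[THEN iffD2, OF subspace_col_span])
  ultimately show thesis
    using that \<open>x = r + n\<close> by simp
qed

text \<open>G inverts A on its row space, so G A is the orthogonal projection onto the row space.\<close>

lemma exists_min_norm_g_inverse: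
  fixes A :: "real^'n^'m"
  obtains G :: "real^'m^'n" where "A ** G ** A = A" and "transpose (G ** A) = G ** A"
proof -
  let ?R = "col_span (transpose A)"
  have span_R: "vec.span ?R = ?R"
    by (simp add: span_vec_eq subspace_col_span)
  have "inj_on ((*v) A) ?R"
  proof (rule inj_onI)
    fix r s assume "r \<in> ?R" "s \<in> ?R" "A *v r = A *v s"
    then have "A *v (r - s) = 0" and "r - s \<in> ?R"
      by (simp_all add: matrix_vector_mult_diff_distrib subspace_diff[OF subspace_col_span])
    then show "r = s"
      using null_space_orthogonal_row_space by fastforce
  qed
  then obtain g where g_range: "range g \<subseteq> ?R" and g_linear: "Vector_Spaces.linear (*s) (*s) g"
    and g_left: "\<forall>r\<in>?R. g (A *v r) = r"
    using vec.linear_inj_on_left_inverse[OF matrix_vector_mul_linear_gen, of A ?R]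
    by (auto simp: span_R)
  define G where "G = matrix g"
  have G_apply: "G *v y = g y" for y
    unfolding G_def by (simp add: matrix_works[OF g_linear])
  have GA_row: "(G ** A) *v x \<in> ?R" for x
    using g_range G_apply by (auto simp: matrix_vector_mul_assoc[symmetric])
  have GA_null: "A *v (x - (G ** A) *v x) = 0" for x
  proof -
    obtain r where "r \<in> ?R" and "A *v (x - r) = 0"
      by (rule row_space_null_space_decomp)
    then show ?thesis
      using g_left G_apply
      by (simp add: matrix_vector_mult_diff_distrib matrix_vector_mul_assoc[symmetric])
  qed
  have "A ** G ** A = A"
    using GA_null by (simp add: matrix_vector_mult_diff_distrib matrix_eq matrix_vector_mul_assoc[symmetric])
  moreover have "transpose (G ** A) = G ** A"
  proof (rule transpose_eq_self_if_self_adjoint)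
    have inner_GA: "((G ** A) *v x) \<bullet> y = ((G ** A) *v x) \<bullet> ((G ** A) *v y)" for x y
      using null_space_orthogonal_row_space[OF GA_null GA_row, of y x]
      by (metis inner_commute inner_diff_left right_minus_eq)
    show "((G ** A) *v x) \<bullet> y = x \<bullet> ((G ** A) *v y)" for x y
      using inner_GA[of x y] inner_GA[of y x] by (simp add: inner_commute)
  qed
  ultimately show thesis
    by (rule that)
qed

lemma exists_least_squares_g_inverse:
  fixes A :: "real^'n^'m"
  obtains K :: "real^'m^'n" where "A ** K ** A = A" and "transpose (A ** K) = A ** K"
proof -
  obtain H where H1: "transpose A ** H ** transpose A = transpose A"
    and H4: "transpose (H ** transpose A) = H ** transpose A"
    by (rule exists_min_norm_g_inverse)
  have "A ** transpose H ** A = transpose (transpose A ** H ** transpose A)"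
    by (simp add: matrix_transpose_mul matrix_mul_assoc)
  then have "A ** transpose H ** A = A"
    using H1 by simp
  moreover have "transpose (A ** transpose H) = A ** transpose H"
    using H4 by (simp add: matrix_transpose_mul)
  ultimately show thesis
    by (rule that)
qed

definition is_pinv :: "real^'n^'m \<Rightarrow> real^'m^'n \<Rightarrow> bool" where
  "is_pinv A B \<longleftrightarrow> A ** B ** A = A \<and> B ** A ** B = B \<and>
                    transpose (A ** B) = A ** B \<and> transpose (B ** A) = B ** A"

lemma exists_is_pinv: "\<exists>B. is_pinv (A::real^'n^'m) B"
proof -
  obtain G where AGA: "A ** G ** A = A" and GA: "transpose (G ** A) = G ** A"
    by (rule exists_min_norm_g_inverse)
  obtain K where AKA: "A ** K ** A = A" and AK: "transpose (A ** K) = A ** K"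
    by (rule exists_least_squares_g_inverse)
  have AB: "A ** (G ** A ** K) = A ** K"
    using AGA by (metis matrix_mul_assoc)
  have BA: "G ** A ** K ** A = G ** A"
    using AKA by (metis matrix_mul_assoc)
  have GAB: "G ** A ** (G ** A ** K) = G ** A ** K"
    using AGA by (metis matrix_mul_assoc)
  have "is_pinv A (G ** A ** K)"
    unfolding is_pinv_def by (simp add: AB BA GAB AKA GA AK)
  then show ?thesis ..
qed

lemma is_pinv_unique:
  assumes "is_pinv A B" and "is_pinv A C"
  shows "B = C"
proof -
  have B: "A ** B ** A = A" "B ** A ** B = B" "transpose (A ** B) = A ** B" "transpose (B ** A) = B ** A"
    using assms(1) unfolding is_pinv_def by auto
  have C: "A ** C ** A = A" "C ** A ** C = C" "transpose (A ** C) = A ** C" "transpose (C ** A) = C ** A"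
    using assms(2) unfolding is_pinv_def by auto
  have "B = B ** transpose (A ** B)"
    using B by (simp add: matrix_mul_assoc)
  also have "\<dots> = B ** transpose B ** transpose (A ** C ** A)"
    using C by (simp add: matrix_transpose_mul matrix_mul_assoc)
  also have "\<dots> = B ** transpose (A ** B) ** transpose (A ** C)"
    by (simp add: matrix_transpose_mul matrix_mul_assoc)
  also have "\<dots> = B ** A ** C"
    using B C by (simp add: matrix_mul_assoc)
  finally have BAC_left: "B = B ** A ** C" .
  have "C = transpose (C ** A) ** C"
    using C by (simp add: matrix_mul_assoc)
  also have "\<dots> = transpose (A ** B ** A) ** transpose C ** C"
    using B by (simp add: matrix_transpose_mul matrix_mul_assoc)
  also have "\<dots> = transpose (B ** A) ** transpose (C ** A) ** C"
    by (simp add: matrix_transpose_mul matrix_mul_assoc)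
  also have "\<dots> = B ** A ** (C ** A ** C)"
    by (simp only: B(4) C(4) matrix_mul_assoc)
  also have "\<dots> = B ** A ** C"
    using C by simp
  finally show ?thesis
    using BAC_left by simp
qed

lemma is_pinv_pinv: "is_pinv A (pinv A)"
proof -
  have "\<exists>!B. is_pinv A B"
    using exists_is_pinv is_pinv_unique by blast
  then show ?thesis
    unfolding pinv_def is_pinv_def[symmetric] by (rule theI')
qed

lemma pinv_mult_col_span:
  assumes "v \<in> col_span A"
  shows "A *v (pinv A *v v) = v"
proof -
  obtain x where "v = A *v x"
    using assms by (auto simp: col_span_def)
  moreover have "A ** pinv A ** A = A"
    using is_pinv_pinv unfolding is_pinv_def by blast
  ultimately show ?thesis
    by (metis matrix_vector_mul_assoc)
qed

lemma inner_pinv_mult: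
  assumes "u \<in> col_span (transpose A)"
  shows "u \<bullet> (pinv A *v (A *v w)) = u \<bullet> w"
proof -
  obtain e where u: "u = transpose A *v e"
    using assms by (auto simp: col_span_def)
  have "u \<bullet> (pinv A *v (A *v w)) = e \<bullet> (A *v (pinv A *v (A *v w)))"
    unfolding u by (metis inner_matrix_vector_transpose transpose_transpose)
  also have "\<dots> = e \<bullet> (A *v w)"
    by (simp add: pinv_mult_col_span)
  also have "\<dots> = u \<bullet> w"
    unfolding u by (metis inner_matrix_vector_transpose transpose_transpose)
  finally show ?thesis .
qed

lemma col_span_subset_if_null_space:
  assumes "\<And>z. transpose A *v z = 0 \<Longrightarrow> transpose X *v z = 0"
  shows "col_span X \<subseteq> col_span A"
proof -
  define P where "P = A ** pinv A"
  have P_sym: "transpose P = P" and PA: "P ** A = A"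
    using is_pinv_pinv unfolding P_def is_pinv_def by blast+
  have "transpose A ** P = transpose A"
    by (metis P_sym PA matrix_transpose_mul)
  then have "transpose X *v (z - P *v z) = 0" for z
    using assms by (metis matrix_vector_mul_assoc matrix_vector_mult_diff_distrib right_minus_eq)
  then have "transpose X ** P = transpose X"
    by (simp add: matrix_vector_mult_diff_distrib matrix_eq matrix_vector_mul_assoc[symmetric])
  then have "P ** X = X"
    by (metis P_sym matrix_transpose_mul transpose_transpose)
  then have "X *v x = A *v (pinv A *v (X *v x))" for x
    unfolding P_def by (metis matrix_vector_mul_assoc)
  then show ?thesis
    by (auto simp: col_span_def)
qed

lemma transpose_add: "transpose (A + B) = transpose A + transpose (B::'a::plus^'n^'m)"
  by (simp add: transpose_def vec_eq_iff)

lemma inner_gram: "z \<bullet> ((X ** transpose X) *v z) = (norm (transpose X *v z))\<^sup>2"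
  for X :: "real^'m^'d"
  by (metis inner_commute inner_matrix_vector_transpose matrix_vector_mul_assoc power2_norm_eq_inner)

lemma gram_sum_null_space:
  fixes X :: "real^'m^'d" and Y :: "real^'n^'d"
  assumes "(X ** transpose X + Y ** transpose Y) *v z = 0"
  shows "transpose X *v z = 0"
proof -
  have "(norm (transpose X *v z))\<^sup>2 + (norm (transpose Y *v z))\<^sup>2
      = z \<bullet> ((X ** transpose X + Y ** transpose Y) *v z)"
    by (simp add: matrix_vector_mult_add_rdistrib inner_gram inner_add_right)
  also have "\<dots> = 0"
    using assms by simp
  finally show ?thesis
    by (simp add: add_nonneg_eq_0_iff)
qed

lemma col_span_subset_gram_sum: "col_span X \<subseteq> col_span (X ** transpose X + Y ** transpose Y)"
proof (rule col_span_subset_if_null_space)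
  have "transpose (X ** transpose X + Y ** transpose Y) = X ** transpose X + Y ** transpose Y"
    by (simp add: transpose_add matrix_transpose_mul)
  then show "transpose (X ** transpose X + Y ** transpose Y) *v z = 0 \<Longrightarrow> transpose X *v z = 0" for z
    by (simp add: gram_sum_null_space)
qed

corollary col_span_subset_gram: "col_span (X::real^'m^'d) \<subseteq> col_span (X ** transpose X)"
  using col_span_subset_gram_sum[of X "0::real^'d^'d"] by simp

lemma gram_sum_eq_split:
  fixes X :: "real^'m^'d" and Y :: "real^'n^'d"
  assumes disjoint: "col_span X \<inter> col_span Y = {0}"
    and eq: "(X ** transpose X + Y ** transpose Y) *v w = X *v a + Y *v b"
  shows "(X ** transpose X) *v w = X *v a"
proof -
  have "X *v (transpose X *v w - a) = Y *v (b - transpose Y *v w)"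
    using eq by (simp add: matrix_vector_mul_assoc algebra_simps)
  then have "X *v (transpose X *v w - a) \<in> col_span X \<inter> col_span Y"
    by (metis IntI col_span_mult)
  then show ?thesis
    using disjoint by (simp add: matrix_vector_mult_diff_distrib matrix_vector_mul_assoc)
qed

lemma inner_pinv_gram_sum:
  fixes X :: "real^'m^'d" and Y :: "real^'n^'d"
  assumes disjoint: "col_span X \<inter> col_span Y = {0}" and u: "u \<in> col_span X"
  shows "u \<bullet> (pinv (X ** transpose X + Y ** transpose Y) *v (X *v a + Y *v b))
       = u \<bullet> (pinv (X ** transpose X) *v (X *v a))"
proof -
  define M where "M = X ** transpose X + Y ** transpose Y"
  define w where "w = pinv M *v (X *v a + Y *v b)"
  have "X *v a \<in> col_span M" and "Y *v b \<in> col_span M"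
    using col_span_subset_gram_sum[of X Y] col_span_subset_gram_sum[of Y X]
    unfolding M_def by (auto simp: add.commute)
  then have "M *v w = X *v a + Y *v b"
    unfolding w_def by (simp add: pinv_mult_col_span subspace_add[OF subspace_col_span])
  then have Mw: "(X ** transpose X) *v w = X *v a"
    unfolding M_def by (rule gram_sum_eq_split[OF disjoint])
  have "u \<in> col_span (transpose (X ** transpose X))"
    using u col_span_subset_gram by (auto simp: matrix_transpose_mul)
  then show ?thesis
    using inner_pinv_mult Mw unfolding w_def M_def by metis
qed

theorem lemma18:
  fixes X :: "real^'m^'d" and Y :: "real^'n^'d"
  assumes "col_span X \<inter> col_span Y = {0}"
  shows "\<forall>u v. (u \<in> col_span X \<and> v \<in> col_span X \<longrightarrow>
              u \<bullet> (pinv (X ** transpose X + Y ** transpose Y) *v v) = u \<bullet> (pinv (X ** transpose X) *v v))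
          \<and> (u \<in> col_span X \<and> v \<in> col_span Y \<longrightarrow>
              u \<bullet> (pinv (X ** transpose X + Y ** transpose Y) *v v) = 0)
          \<and> (u \<in> col_span Y \<and> v \<in> col_span Y \<longrightarrow>
              u \<bullet> (pinv (X ** transpose X + Y ** transpose Y) *v v) = u \<bullet> (pinv (Y ** transpose Y) *v v))"
proof (intro allI conjI impI; elim conjE)
  fix u v
  have disjoint': "col_span Y \<inter> col_span X = {0}"
    using assms by blast
  show "u \<bullet> (pinv (X ** transpose X + Y ** transpose Y) *v v) = u \<bullet> (pinv (X ** transpose X) *v v)"
    if "u \<in> col_span X" and "v \<in> col_span X"
    using that inner_pinv_gram_sum[OF assms, of u _ 0] by (auto simp: col_span_def)
  show "u \<bullet> (pinv (X ** transpose X + Y ** transpose Y) *v v) = 0"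
    if "u \<in> col_span X" and "v \<in> col_span Y"
    using that inner_pinv_gram_sum[OF assms, of u 0] by (auto simp: col_span_def)
  show "u \<bullet> (pinv (X ** transpose X + Y ** transpose Y) *v v) = u \<bullet> (pinv (Y ** transpose Y) *v v)"
    if "u \<in> col_span Y" and "v \<in> col_span Y"
    using that inner_pinv_gram_sum[OF disjoint', of u _ 0] by (auto simp: col_span_def add.commute)
qed

end
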